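(* Let $a_1,\dots,a_n\in\mathbb R^d$ be orthonormal ($n\le d$), $T=\sum_{i=1}^n a_i^{\otimes4}$, and $f(x)=\langle T,x^{\otimes4}\rangle$ restricted to the unit sphere $S^{d-1}$. Then every local maximum of $f$ on $S^{d-1}$ is a global maximum; i.e., the local maxima of $f$ on $S^{d-1}$ are exactly $\pm a_1,\dots,\pm a_n$.
   Context: $a^{\otimes4}$ denotes the 4-th order tensor with entries $a_ia_ja_ka_l$; $\langle T,S\rangle$ is the entrywise inner product of tensors. A local maximum on $S^{d-1}$ is a point $x\in S^{d-1}$ having a neighborhood $N$ in $S^{d-1}$ with $f(y)\le f(x)$ for all $y\in N$. *)

theory Defs
  imports "HOL-Analysis.Analysis"
begin

definition tensor4 :: "real^'d \<Rightarrow> 'd \<Rightarrow> 'd \<Rightarrow> 'd \<Rightarrow> 'd \<Rightarrow> real" where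
  "tensor4 a i j k l = a$i * a$j * a$k * a$l"

definition tinner :: "('d::finite \<Rightarrow> 'd \<Rightarrow> 'd \<Rightarrow> 'd \<Rightarrow> real) \<Rightarrow> ('d \<Rightarrow> 'd \<Rightarrow> 'd \<Rightarrow> 'd \<Rightarrow> real) \<Rightarrow> real" where
  "tinner T S = (\<Sum>i\<in>UNIV. \<Sum>j\<in>UNIV. \<Sum>k\<in>UNIV. \<Sum>l\<in>UNIV. T i j k l * S i j k l)"

definition local_max_on :: "('a::topological_space \<Rightarrow> real) \<Rightarrow> 'a set \<Rightarrow> 'a \<Rightarrow> bool" where
  "local_max_on f S x \<longleftrightarrow> x \<in> S \<and>
     (\<exists>N. openin (top_of_set S) N \<and> x \<in> N \<and> (\<forall>y\<in>N. f y \<le> f x))"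

end

(* With c_i = a_i \<bullet> x, f(x) = \<Sum> c_i^4 is 4-homogeneous, so a local maximum x on the sphere
   satisfies f z \<le> f x * \<parallel>z\<parallel>^4 for all z near x, a condition that can be tested along
   lines x + t v.  Moving x towards the span of the a_i leaves f unchanged but shrinks the norm,
   so x lies in that span.  Rotating x in the plane of a_j and a_k forces c_j^2 = c_k^2 (first
   order) and 6 c_j^2 c_k^2 \<le> f x (c_j^2 + c_k^2) (second order) whenever j \<noteq> k; as
   f x = c_j^2 for every nonzero c_j, at most one coefficient is nonzero, so x = \<plusminus>a_j.
   Conversely f \<le> \<Sum> c_i^2 \<le> 1 on the sphere by Bessel's inequality, with equality at \<plusminus>a_j. *)
theory Submission
  imports Defs
begin

lemma eventually_nonpos_of_mult_nonpos_at_right: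
  assumes "\<forall>\<^sub>F t in at_right 0. t * g t \<le> (0::real)"
  shows "\<forall>\<^sub>F t in at_right 0. g t \<le> 0"
  using eventually_conj[OF assms eventually_at_right_less]
  by eventually_elim (auto simp: mult_le_0_iff)

lemma poly4_nonpos_near_zero_coeffs:
  fixes A B C D :: real
  assumes "\<forall>\<^sub>F t in nhds 0. A*t + B*t^2 + C*t^3 + D*t^4 \<le> 0"
  shows "A = 0" and "B \<le> 0"
proof -
  have right: "\<forall>\<^sub>F t in at_right 0. A*t + B*t^2 + C*t^3 + D*t^4 \<le> 0"
    using assms by (simp add: eventually_nhds_conv_at eventually_at_split)
  have "filterlim uminus (nhds 0) (nhds (0::real))"
    using tendsto_minus[OF filterlim_ident, of "0::real"] by simp
  then have "\<forall>\<^sub>F t in nhds 0. A*(-t) + B*(-t)^2 + C*(-t)^3 + D*(-t)^4 \<le> 0"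
    using assms by (rule eventually_compose_filterlim[rotated])
  then have left: "\<forall>\<^sub>F t in at_right 0. (-A)*t + B*t^2 + (-C)*t^3 + D*t^4 \<le> 0"
    by (simp add: eventually_nhds_conv_at eventually_at_split)
  have lim: "((\<lambda>t. A' + B'*t + C'*t^2 + D'*t^3) \<longlongrightarrow> A') (at_right 0)" for A' B' C' D' :: real
    by (auto intro!: tendsto_eq_intros)
  have pos: "\<forall>\<^sub>F t in at_right 0. t * (A + B*t + C*t^2 + D*t^3) \<le> 0"
    using right by eventually_elim (simp add: algebra_simps power2_eq_square power3_eq_cube power4_eq_xxxx)
  have neg: "\<forall>\<^sub>F t in at_right 0. t * (-A + B*t + (-C)*t^2 + D*t^3) \<le> 0"
    using left by eventually_elim (simp add: algebra_simps power2_eq_square power3_eq_cube power4_eq_xxxx)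
  have "A \<le> 0"
    using tendsto_upperbound[OF lim eventually_nonpos_of_mult_nonpos_at_right[OF pos]] by simp
  moreover have "-A \<le> 0"
    using tendsto_upperbound[OF lim eventually_nonpos_of_mult_nonpos_at_right[OF neg]] by simp
  ultimately show A0: "A = 0" by simp
  have "\<forall>\<^sub>F t in at_right 0. t * (t * (B + C*t + D*t^2)) \<le> 0"
    using right by eventually_elim (simp add: A0 algebra_simps power2_eq_square power3_eq_cube power4_eq_xxxx)
  then have "\<forall>\<^sub>F t in at_right 0. t * (B + C*t + D*t^2) \<le> 0"
    by (rule eventually_nonpos_of_mult_nonpos_at_right)
  then have quadratic: "\<forall>\<^sub>F t in at_right 0. B + C*t + D*t^2 \<le> 0"
    by (rule eventually_nonpos_of_mult_nonpos_at_right)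
  have "((\<lambda>t. B + C*t + D*t^2) \<longlongrightarrow> B) (at_right 0)"
    by (auto intro!: tendsto_eq_intros)
  from tendsto_upperbound[OF this quadratic] show "B \<le> 0" by simp
qed

lemma eventually_nhds_along_line:
  fixes x v :: "'a::real_normed_vector"
  assumes "\<forall>\<^sub>F z in nhds x. P z"
  shows "\<forall>\<^sub>F t in nhds 0. P (x + t *\<^sub>R v)"
proof -
  have "((\<lambda>t. x + t *\<^sub>R v) \<longlongrightarrow> x + 0 *\<^sub>R v) (nhds 0)"
    by (intro tendsto_add tendsto_const tendsto_scaleR filterlim_ident)
  then have "filterlim (\<lambda>t. x + t *\<^sub>R v) (nhds x) (nhds 0)" by simp
  from eventually_compose_filterlim[OF assms this] show ?thesis .
qed

lemma local_max_on_sphere_homogeneous: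
  fixes f :: "'a::real_normed_vector \<Rightarrow> real"
  assumes max: "local_max_on f (sphere 0 1) x"
    and homogeneous: "\<And>r z. r > 0 \<Longrightarrow> f (r *\<^sub>R z) = r ^ k * f z"
  shows "\<forall>\<^sub>F z in nhds x. f z \<le> f x * norm z ^ k"
proof -
  obtain N where x: "norm x = 1" and N: "openin (top_of_set (sphere 0 1)) N" "x \<in> N"
    and le: "\<forall>y\<in>N. f y \<le> f x"
    using max unfolding local_max_on_def by auto
  obtain e where e: "e > 0" "ball x e \<inter> sphere 0 1 \<subseteq> N"
    using N unfolding openin_contains_ball by blast
  have bound: "f z \<le> f x * norm z ^ k" if z: "dist z x < min (e/2) 1" for z
  proof -
    have dist_norm_z: "\<bar>1 - norm z\<bar> \<le> dist z x"
      using norm_triangle_ineq3[of x z] x by (simp add: dist_norm norm_minus_commute)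
    then have z_pos: "norm z > 0" using z by linarith
    define y where "y = (1 / norm z) *\<^sub>R z"
    have "y - z = (1 / norm z - 1) *\<^sub>R z" by (simp add: y_def algebra_simps)
    then have "dist y z = \<bar>(1 / norm z - 1) * norm z\<bar>"
      by (simp add: dist_norm abs_mult)
    also have "\<dots> = \<bar>1 - norm z\<bar>" using z_pos by (simp add: algebra_simps)
    finally have "dist y x < e"
      using dist_triangle[of y x z] dist_norm_z z by linarith
    moreover have "norm y = 1" using z_pos by (simp add: y_def)
    ultimately have "y \<in> N" using e(2) by (simp add: dist_commute subset_iff)
    with le have "f y \<le> f x" by blast
    then have "(1 / norm z) ^ k * f z \<le> f x"
      using homogeneous[of "1 / norm z" z] z_pos by (simp add: y_def)
    then have "norm z ^ k * ((1 / norm z) ^ k * f z) \<le> norm z ^ k * f x"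
      by (rule mult_left_mono) simp
    moreover have "norm z ^ k * ((1 / norm z) ^ k * f z) = f z"
      using z_pos by (simp add: power_one_over)
    ultimately show ?thesis by (simp only: mult.commute[of "f x"])
  qed
  have "min (e/2) 1 > 0" using e(1) by simp
  with bound show ?thesis
    unfolding eventually_nhds_metric by (intro exI[of _ "min (e/2) 1"] conjI allI impI)
qed

lemma local_max_on_if_max_on:
  assumes "x \<in> S" and "\<forall>y\<in>S. f y \<le> f x"
  shows "local_max_on f S x"
  using assms unfolding local_max_on_def by (intro conjI exI[of _ S]) auto

lemma tinner_sum_left:
  "tinner (\<lambda>p q r s. \<Sum>i\<in>I. T i p q r s) S = (\<Sum>i\<in>I. tinner (T i) S)"
  unfolding tinner_def by (simp add: sum_distrib_right sum.swap[of _ I])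

lemma tinner_tensor4: "tinner (tensor4 a) (tensor4 x) = (a \<bullet> x) ^ 4"
  unfolding tinner_def tensor4_def inner_vec_def inner_real_def
  by (simp add: power4_eq_xxxx sum_distrib_left sum_distrib_right mult_ac)

locale orthonormal_family =
  fixes a :: "nat \<Rightarrow> 'a::real_inner" and n :: nat
  assumes orthonormal: "\<forall>i<n. \<forall>j<n. a i \<bullet> a j = (if i = j then 1 else 0)"
begin

lemma inner_combination: "k < n \<Longrightarrow> a k \<bullet> (\<Sum>i<n. b i *\<^sub>R a i) = b k"
  by (simp add: inner_sum_right orthonormal if_distrib[of "(*) _"] cong: if_cong)

lemma inner_combination_self: "(\<Sum>i<n. b i *\<^sub>R a i) \<bullet> (\<Sum>i<n. b i *\<^sub>R a i) = (\<Sum>i<n. (b i)^2)"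
  by (simp add: inner_sum_left inner_combination power2_eq_square)

lemma bessel_inequality: "(\<Sum>i<n. (a i \<bullet> y)^2) \<le> y \<bullet> y"
proof -
  define p where "p = (\<Sum>i<n. (a i \<bullet> y) *\<^sub>R a i)"
  have "y \<bullet> p = (\<Sum>i<n. (a i \<bullet> y)^2)"
    unfolding p_def by (simp add: inner_sum_right power2_eq_square inner_commute)
  moreover have "p \<bullet> p = (\<Sum>i<n. (a i \<bullet> y)^2)"
    unfolding p_def by (rule inner_combination_self)
  moreover have "0 \<le> (y - p) \<bullet> (y - p)" by simp
  ultimately show ?thesis by (simp add: algebra_simps inner_commute)
qed

lemma norm_basis: "j < n \<Longrightarrow> norm (a j) = 1"
  using orthonormal by (simp add: norm_eq_sqrt_inner)

definition quartic :: "'a \<Rightarrow> real" where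
  "quartic z = (\<Sum>i<n. (a i \<bullet> z)^4)"

lemma quartic_scaleR: "quartic (r *\<^sub>R z) = r^4 * quartic z"
  by (simp add: quartic_def sum_distrib_left power_mult_distrib)

lemma quartic_nonneg: "quartic z \<ge> 0"
  by (simp add: quartic_def sum_nonneg)

lemma quartic_basis: "j < n \<Longrightarrow> quartic (a j) = 1" "j < n \<Longrightarrow> quartic (- a j) = 1"
  using orthonormal by (simp_all add: quartic_def if_distrib[of "\<lambda>x. x ^ 4"] cong: if_cong)

lemma quartic_le_one:
  assumes "norm y = 1"
  shows "quartic y \<le> 1"
proof -
  have sum_sq: "(\<Sum>i<n. (a i \<bullet> y)^2) \<le> 1"
    using bessel_inequality[of y] assms by (simp add: power2_norm_eq_inner[symmetric])
  have "(a i \<bullet> y)^4 \<le> (a i \<bullet> y)^2" if "i < n" for i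
  proof -
    have "(a i \<bullet> y)^2 \<le> 1"
      using member_le_sum[of i "{..<n}" "\<lambda>i. (a i \<bullet> y)^2"] that sum_sq by simp
    then have "(a i \<bullet> y)^2 * (a i \<bullet> y)^2 \<le> 1 * (a i \<bullet> y)^2"
      by (intro mult_right_mono) auto
    then show ?thesis by (simp add: power4_eq_xxxx power2_eq_square)
  qed
  then have "quartic y \<le> (\<Sum>i<n. (a i \<bullet> y)^2)"
    unfolding quartic_def by (intro sum_mono) auto
  with sum_sq show ?thesis by simp
qed

context
  fixes x :: 'a
  assumes norm_x: "norm x = 1"
    and cone_max: "\<forall>\<^sub>F z in nhds x. quartic z \<le> quartic x * norm z ^ 4"
begin

lemma cone_max_along_line:
  "\<forall>\<^sub>F t in nhds 0. quartic (x + t *\<^sub>R v) \<le> quartic x * ((x + t *\<^sub>R v) \<bullet> (x + t *\<^sub>R v))^2"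
  using eventually_nhds_along_line[OF cone_max, of v]
  by (simp add: power2_norm_eq_inner[symmetric] power_mult[symmetric])

lemma inner_self_x: "x \<bullet> x = 1"
  using norm_x by (simp add: power2_norm_eq_inner[symmetric])

lemma quartic_pos:
  assumes "n > 0"
  shows "quartic x > 0"
proof (rule ccontr)
  assume "\<not> quartic x > 0"
  then have "quartic x = 0" using quartic_nonneg[of x] by simp
  then have orth_x: "\<forall>i<n. a i \<bullet> x = 0" by (simp add: quartic_def sum_nonneg_eq_0_iff)
  have "quartic (x + t *\<^sub>R a 0) = (\<Sum>i<n. if i = 0 then t^4 else 0)" for t
    unfolding quartic_def using orthonormal orth_x assms
    by (intro sum.cong) (auto simp: inner_add_right)
  then have "quartic (x + t *\<^sub>R a 0) = t^4" for t
    using assms by simp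
  then have "\<forall>\<^sub>F t in nhds 0. t^4 \<le> (0::real)"
    using cone_max_along_line[of "a 0"] \<open>quartic x = 0\<close> by simp
  then have "\<forall>\<^sub>F t in at_right 0. t^4 \<le> (0::real) \<and> 0 < t"
    by (intro eventually_conj eventually_at_right_less) (simp add: eventually_nhds_conv_at eventually_at_split)
  then show False
    using eventually_happens'[OF trivial_limit_at_right_real] by (auto simp: not_le[symmetric])
qed

lemma in_span:
  assumes "n > 0"
  shows "x = (\<Sum>i<n. (a i \<bullet> x) *\<^sub>R a i)"
proof -
  define p where "p = (\<Sum>i<n. (a i \<bullet> x) *\<^sub>R a i)"
  define w where "w = x - p"
  define F W where "F = quartic x" and "W = w \<bullet> w"
  have orth_w: "a k \<bullet> w = 0" if "k < n" for k
    using inner_combination[OF that] by (simp add: w_def p_def inner_diff_right)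
  then have "p \<bullet> w = 0" unfolding p_def by (simp add: inner_sum_left)
  then have "x \<bullet> w = W" by (simp add: W_def w_def inner_diff_left inner_commute)
  then have "(x + t *\<^sub>R w) \<bullet> (x + t *\<^sub>R w) = 1 + (2*t + t^2) * W" for t
    using inner_self_x by (simp add: W_def algebra_simps inner_commute power2_eq_square)
  moreover have "quartic (x + t *\<^sub>R w) = F" for t
    by (simp add: F_def quartic_def inner_add_right orth_w)
  ultimately have "\<forall>\<^sub>F t in nhds 0. F \<le> F * (1 + (2*t + t^2) * W)^2"
    using cone_max_along_line[of w] by (simp add: F_def)
  then have "\<forall>\<^sub>F t in nhds 0.
      (-4*F*W)*t + (-2*F*W - 4*F*W^2)*t^2 + (-4*F*W^2)*t^3 + (-F*W^2)*t^4 \<le> 0"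
    by eventually_elim (simp add: algebra_simps power2_eq_square power3_eq_cube power4_eq_xxxx)
  from poly4_nonpos_near_zero_coeffs(1)[OF this] have "F * W = 0" by simp
  then have "w = 0" using quartic_pos[OF assms] by (simp add: F_def W_def)
  then show ?thesis by (simp add: w_def p_def)
qed

text \<open>The direction c_k a_j - c_j a_k rotates x within the plane of a_j and a_k; the first-
  and second-order terms of cone_max along it give the two conclusions.\<close>
lemma pair_condition:
  assumes jk: "j < n" "k < n" "j \<noteq> k"
  defines "cj \<equiv> a j \<bullet> x" and "ck \<equiv> a k \<bullet> x"
  shows "cj * ck * (cj^2 - ck^2) = 0" and "6 * cj^2 * ck^2 \<le> quartic x * (cj^2 + ck^2)"
proof -
  define v where "v = ck *\<^sub>R a j - cj *\<^sub>R a k"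
  define F s where "F = quartic x" and "s = cj^2 + ck^2"
  have av: "a i \<bullet> v = (if i = j then ck else if i = k then - cj else 0)" if "i < n" for i
    using orthonormal that jk by (auto simp: v_def inner_diff_right)
  have "x \<bullet> v = 0" by (simp add: v_def inner_diff_right cj_def ck_def inner_commute)
  moreover have "v \<bullet> v = s"
    using orthonormal jk by (simp add: v_def inner_diff_left inner_diff_right s_def power2_eq_square inner_commute)
  ultimately have norm_line: "(x + t *\<^sub>R v) \<bullet> (x + t *\<^sub>R v) = 1 + t^2 * s" for t
    using inner_self_x by (simp add: algebra_simps inner_commute power2_eq_square)
  have quartic_line: "quartic (x + t *\<^sub>R v) = F + ((cj + t*ck)^4 - cj^4) + ((ck - t*cj)^4 - ck^4)" for t
  proof -
    have "quartic (x + t *\<^sub>R v) - F = (\<Sum>i<n. (a i \<bullet> (x + t *\<^sub>R v))^4 - (a i \<bullet> x)^4)"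
      by (simp add: F_def quartic_def sum_subtractf)
    also have "\<dots> = (\<Sum>i<n. (if i = j then (cj + t*ck)^4 - cj^4 else 0)
                        + (if i = k then (ck - t*cj)^4 - ck^4 else 0))"
      using jk by (intro sum.cong refl) (auto simp: inner_add_right av cj_def ck_def)
    also have "\<dots> = ((cj + t*ck)^4 - cj^4) + ((ck - t*cj)^4 - ck^4)"
      using jk by (simp add: sum.distrib)
    finally show ?thesis by simp
  qed
  have "\<forall>\<^sub>F t in nhds 0. F + ((cj + t*ck)^4 - cj^4) + ((ck - t*cj)^4 - ck^4) \<le> F * (1 + t^2 * s)^2"
    using cone_max_along_line[of v] by (simp add: F_def norm_line quartic_line)
  then have "\<forall>\<^sub>F t in nhds 0. (4*cj*ck*(cj^2 - ck^2))*t + (12*cj^2*ck^2 - 2*F * s)*t^2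
      + (4*cj*ck^3 - 4*ck*cj^3)*t^3 + (ck^4 + cj^4 - F * s^2)*t^4 \<le> 0"
    by eventually_elim (simp add: algebra_simps power2_eq_square power3_eq_cube power4_eq_xxxx)
  from poly4_nonpos_near_zero_coeffs[OF this]
  show "cj * ck * (cj^2 - ck^2) = 0" and "6 * cj^2 * ck^2 \<le> quartic x * (cj^2 + ck^2)"
    by (simp_all add: F_def s_def)
qed

lemma eq_basis_vector:
  assumes "n > 0"
  shows "\<exists>j<n. x = a j \<or> x = - a j"
proof -
  define c where "c i = a i \<bullet> x" for i
  have sum_sq: "(\<Sum>i<n. (c i)^2) = 1"
    using inner_self_x in_span[OF assms] inner_combination_self[of c] by (simp add: c_def)
  have "\<exists>j<n. c j \<noteq> 0"
  proof (rule ccontr)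
    assume "\<not> (\<exists>j<n. c j \<noteq> 0)"
    then have "(\<Sum>i<n. (c i)^2) = 0" by simp
    with sum_sq show False by simp
  qed
  then obtain j where j: "j < n" "c j \<noteq> 0" by blast
  define u where "u = (c j)^2"
  have u_pos: "u > 0" using j by (simp add: u_def)
  have same_sq: "(c i)^2 = u" if "i < n" "c i \<noteq> 0" for i
    using pair_condition(1)[of j i] that j by (cases "i = j") (auto simp: u_def c_def)
  have "(c i)^4 = u * (c i)^2" if "i < n" for i
  proof -
    have "(c i)^4 = (c i)^2 * (c i)^2" by algebra
    then show ?thesis using same_sq[OF that] by (cases "c i = 0") simp_all
  qed
  then have "quartic x = (\<Sum>i<n. u * (c i)^2)"
    unfolding quartic_def c_def[symmetric] by simp
  then have quartic_u: "quartic x = u" using sum_sq by (simp flip: sum_distrib_left)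
  have others: "c i = 0" if "i < n" "i \<noteq> j" for i
  proof (rule ccontr)
    assume "c i \<noteq> 0"
    then have "6 * u * u \<le> u * (u + u)"
      using pair_condition(2)[OF j(1) that(1) that(2)[symmetric]] same_sq[OF that(1)]
      by (simp add: c_def[symmetric] quartic_u u_def)
    with u_pos show False by (simp add: algebra_simps)
  qed
  have "(\<Sum>i<n. c i *\<^sub>R a i) = (\<Sum>i<n. if i = j then c j *\<^sub>R a j else 0)"
    using others by (intro sum.cong) auto
  then have "x = c j *\<^sub>R a j"
    using in_span[OF assms] j by (simp add: c_def)
  moreover have "(c j)^2 = 1"
    using sum_sq j others by (simp add: sum.remove[of "{..<n}" j])
  ultimately show ?thesis using j by (auto simp: power2_eq_1_iff)
qed

end

end

theorem theorem5p2:
  fixes a :: "nat \<Rightarrow> real^'d" and n :: nat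
  assumes "n \<ge> 1"
    and "\<forall>i<n. \<forall>j<n. a i \<bullet> a j = (if i = j then 1 else 0)"
  defines "f \<equiv> (\<lambda>x. tinner (\<lambda>p q r s. \<Sum>i<n. tensor4 (a i) p q r s) (tensor4 x))"
  shows "(\<forall>x. local_max_on f (sphere 0 1) x \<longrightarrow> (\<forall>y\<in>sphere 0 1. f y \<le> f x))
       \<and> {x. local_max_on f (sphere 0 1) x} = {a i | i. i < n} \<union> {- a i | i. i < n}"
proof -
  interpret orthonormal_family a n using assms(2) by unfold_locales
  have "f x = quartic x" for x
    unfolding f_def tinner_sum_left by (simp add: tinner_tensor4 quartic_def)
  then have f_quartic: "f = quartic" by blast
  have homogeneous: "f (r *\<^sub>R z) = r ^ 4 * f z" for r z
    by (simp add: f_quartic quartic_scaleR)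
  have max_is_basis: "\<exists>j<n. x = a j \<or> x = - a j" if "local_max_on f (sphere 0 1) x" for x
  proof (rule eq_basis_vector)
    show "norm x = 1" using that by (simp add: local_max_on_def)
    show "\<forall>\<^sub>F z in nhds x. quartic z \<le> quartic x * norm z ^ 4"
      using local_max_on_sphere_homogeneous[OF that homogeneous] by (simp only: f_quartic)
    show "n > 0" using assms(1) by simp
  qed
  have basis_is_max: "local_max_on f (sphere 0 1) x \<and> (\<forall>y\<in>sphere 0 1. f y \<le> f x)"
    if "j < n" "x = a j \<or> x = - a j" for j x
  proof -
    have "x \<in> sphere 0 1" using that norm_basis by auto
    moreover have "\<forall>y\<in>sphere 0 1. f y \<le> f x"
      using that quartic_basis quartic_le_one by (auto simp: f_quartic)
    ultimately show ?thesis using local_max_on_if_max_on by blast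
  qed
  show ?thesis
  proof (intro conjI allI impI)
    fix x assume "local_max_on f (sphere 0 1) x"
    with max_is_basis basis_is_max show "\<forall>y\<in>sphere 0 1. f y \<le> f x" by blast
  next
    show "{x. local_max_on f (sphere 0 1) x} = {a i | i. i < n} \<union> {- a i | i. i < n}"
      using max_is_basis basis_is_max by blast
  qed
qed

end
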